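(* Let $\Psi$ be a commuting interaction on a finite graph $\Lambda$, let $F:[0,\infty)\to(0,\infty)$ be a decaying function and assume $\|\Psi\|_F<\infty$. Then for all $t\in\mathbb{R}$: (i) for all disjoint $X,Y\subset\Lambda$ and $A\in\mathcal{A}_X$, $B\in\mathcal{A}_Y$, $$\big\|[\tau^\Lambda_t(A),B]\big\|\le 4\,\|\Psi\|_F\,\|A\|\,\|B\|\,|t|\sum_{x\in X}\sum_{y\in Y}F(d(x,y));$$ (ii) for all $X\subset\Lambda$, $A\in\mathcal{A}_X$ and $r\ge0$, $$\big\|\tau^\Lambda_t(A)-\mathbb{E}_{X_r}[\tau^\Lambda_t(A)]\big\|\le 4\,\|\Psi\|_F\,\|A\|\,|t|\sum_{x\in X}\sum_{y\in\Lambda\setminus X_r}F(d(x,y)).$$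
   Context: $\Lambda$ has graph distance $d$. Each site carries $\mathbb{C}^q$, $\mathcal{A}_Z=\mathcal{B}(\bigotimes_{x\in Z}\mathbb{C}^q)$ embedded in $\mathcal{A}_\Lambda$ via $A\mapsto A\otimes\mathbf{1}$. An interaction assigns to each $Z\subset\Lambda$ a self-adjoint $\Psi(Z)\in\mathcal{A}_Z$; commuting means $[\Psi(Z),\Psi(Z')]=0$ for all $Z,Z'$. $\|\Psi\|_F=\sup_{x,y\in\Lambda}\sum_{Z\ni x,y}\|\Psi(Z)\|/F(d(x,y))$. $H_\Lambda=\sum_{Z\subset\Lambda}\Psi(Z)$, $\tau^\Lambda_t(A)=e^{itH_\Lambda}Ae^{-itH_\Lambda}$. $X_r=\{z\in\Lambda:\mathrm{dist}(z,X)\le r\}$ and $\mathbb{E}_{X_r}(A)=\frac{1}{\mathrm{tr}_{\Lambda\setminus X_r}\mathbf{1}}\mathrm{tr}_{\Lambda\setminus X_r}(A)$ is the normalized partial trace over $\Lambda\setminus X_r$. *)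

theory Defs
  imports "HOL-Analysis.Analysis"
begin

text \<open>Sites: a finite type 'a (the vertex set Lambda).  One-site space C^q with
  q = CARD('q).  The Hilbert space of Lambda is C^(configurations), a configuration
  being a function 'a => 'q (computational basis).\<close>

type_synonym ('a, 'q) obs = "complex ^ ('a \<Rightarrow> 'q) ^ ('a \<Rightarrow> 'q)"

definition walk_len :: "('a \<Rightarrow> 'a \<Rightarrow> bool) \<Rightarrow> nat \<Rightarrow> 'a \<Rightarrow> 'a \<Rightarrow> bool" where
  "walk_len E n x y \<longleftrightarrow>
     (\<exists>p::nat \<Rightarrow> 'a. p 0 = x \<and> p n = y \<and> (\<forall>i<n. E (p i) (p (Suc i))))"

definition connected_graph :: "('a \<Rightarrow> 'a \<Rightarrow> bool) \<Rightarrow> bool" where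
  "connected_graph E \<longleftrightarrow> (\<forall>x y. \<exists>n. walk_len E n x y)"

definition graph_dist :: "('a \<Rightarrow> 'a \<Rightarrow> bool) \<Rightarrow> 'a \<Rightarrow> 'a \<Rightarrow> real" where
  "graph_dist E x y = real (LEAST n. walk_len E n x y)"

definition nbhd :: "('a \<Rightarrow> 'a \<Rightarrow> bool) \<Rightarrow> 'a set \<Rightarrow> real \<Rightarrow> 'a set" where
  "nbhd E X r = {z. \<exists>x\<in>X. graph_dist E z x \<le> r}"

definition opnorm :: "complex ^ 'n ^ 'm \<Rightarrow> real" where
  "opnorm A = onorm (\<lambda>v::complex ^ 'n. A *v v)"

definition cadj :: "complex ^ 'n ^ 'n \<Rightarrow> complex ^ 'n ^ 'n" where
  "cadj A = (\<chi> i j. cnj (A $ j $ i))"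

definition self_adjoint :: "complex ^ 'n ^ 'n \<Rightarrow> bool" where
  "self_adjoint A \<longleftrightarrow> cadj A = A"

definition cscale :: "complex \<Rightarrow> complex ^ 'n ^ 'm \<Rightarrow> complex ^ 'n ^ 'm" where
  "cscale c A = (\<chi> i j. c * A $ i $ j)"

fun mpow :: "complex ^ 'n ^ 'n \<Rightarrow> nat \<Rightarrow> complex ^ 'n ^ 'n" where
  "mpow M 0 = mat 1"
| "mpow M (Suc k) = M ** mpow M k"

definition mexp :: "complex ^ 'n ^ 'n \<Rightarrow> complex ^ 'n ^ 'n" where
  "mexp M = (\<Sum>k. (1 / fact k) *\<^sub>R mpow M k)"

definition commutator :: "complex ^ 'n ^ 'n \<Rightarrow> complex ^ 'n ^ 'n \<Rightarrow> complex ^ 'n ^ 'n" where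
  "commutator A B = A ** B - B ** A"

definition restr :: "'a set \<Rightarrow> ('a \<Rightarrow> 'q) \<Rightarrow> ('a \<Rightarrow> 'q)" where
  "restr Z \<sigma> = (\<lambda>x. if x \<in> Z then \<sigma> x else undefined)"

text \<open>Configurations of the sites in Z (the basis of the tensor product over Z).\<close>
definition configs_on :: "'a set \<Rightarrow> ('a \<Rightarrow> 'q) set" where
  "configs_on Z = {\<rho>. \<forall>x. x \<notin> Z \<longrightarrow> \<rho> x = undefined}"

text \<open>Embedding a \<mapsto> a \<otimes> 1 of an operator a on the sites Z (matrix indexed by
  configurations on Z) into A_Lambda.\<close>
definition embed :: "'a set \<Rightarrow> (('a \<Rightarrow> 'q) \<Rightarrow> ('a \<Rightarrow> 'q) \<Rightarrow> complex) \<Rightarrow> ('a::finite, 'q::finite) obs" where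
  "embed Z a = (\<chi> \<sigma> \<tau>. if (\<forall>x. x \<notin> Z \<longrightarrow> \<sigma> x = \<tau> x) then a (restr Z \<sigma>) (restr Z \<tau>) else 0)"

definition local_alg :: "'a set \<Rightarrow> ('a::finite, 'q::finite) obs set" where
  "local_alg Z = range (embed Z)"

text \<open>Normalized partial trace over Lambda \ S, result viewed in A_S (embedded).\<close>
definition cond_exp :: "'a set \<Rightarrow> ('a::finite, 'q::finite) obs \<Rightarrow> ('a, 'q) obs" where
  "cond_exp S A = embed S (\<lambda>\<sigma> \<tau>.
      (\<Sum>\<rho>\<in>configs_on (- S). A $ (\<lambda>x. if x \<in> S then \<sigma> x else \<rho> x)
                                    $ (\<lambda>x. if x \<in> S then \<tau> x else \<rho> x))
      / of_nat (card (configs_on (- S) :: ('a \<Rightarrow> 'q) set)))"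

definition interaction :: "('a set \<Rightarrow> ('a::finite, 'q::finite) obs) \<Rightarrow> bool" where
  "interaction \<Psi> \<longleftrightarrow> (\<forall>Z. \<Psi> Z \<in> local_alg Z \<and> self_adjoint (\<Psi> Z))"

definition commuting :: "('a set \<Rightarrow> ('a::finite, 'q::finite) obs) \<Rightarrow> bool" where
  "commuting \<Psi> \<longleftrightarrow> (\<forall>Z Z'. commutator (\<Psi> Z) (\<Psi> Z') = 0)"

definition hamiltonian :: "('a set \<Rightarrow> ('a::finite, 'q::finite) obs) \<Rightarrow> ('a, 'q) obs" where
  "hamiltonian \<Psi> = (\<Sum>Z\<in>(UNIV :: 'a set set). \<Psi> Z)"

definition tau :: "('a set \<Rightarrow> ('a::finite, 'q::finite) obs) \<Rightarrow> real \<Rightarrow> ('a, 'q) obs \<Rightarrow> ('a, 'q) obs" where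
  "tau \<Psi> t A = mexp (cscale (\<i> * of_real t) (hamiltonian \<Psi>)) ** A
                  ** mexp (cscale (- \<i> * of_real t) (hamiltonian \<Psi>))"

definition decaying :: "(real \<Rightarrow> real) \<Rightarrow> bool" where
  "decaying F \<longleftrightarrow> (\<forall>r\<ge>0. F r > 0) \<and> (\<forall>r s. 0 \<le> r \<and> r \<le> s \<longrightarrow> F s \<le> F r)"

definition F_norm :: "('a \<Rightarrow> 'a \<Rightarrow> bool) \<Rightarrow> (real \<Rightarrow> real) \<Rightarrow> ('a set \<Rightarrow> ('a::finite, 'q::finite) obs) \<Rightarrow> real" where
  "F_norm E F \<Psi> = Max {(\<Sum>Z\<in>{Z. x \<in> Z \<and> y \<in> Z}. opnorm (\<Psi> Z)) / F (graph_dist E x y) | x y. True}"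

end

theory Submission
  imports Defs
begin

(* Since the interaction commutes, the Hamiltonian splits as H = W + P + Q, where W collects the
   terms meeting both X and Y, P those meeting X but not Y, and Q those not meeting X.  The three
   parts commute, and Q commutes with A, so tau_t(A) = e^{itW} C e^{-itW} with C = e^{itP} A e^{-itP},
   an observable supported away from Y.  As e^{itW} is unitary, ||tau_t(A) - C|| <= 2|t| ||W|| ||A||,
   and ||W|| <= ||Psi||_F sum_{x in X, y in Y} F(d(x,y)) by definition of the F-norm.  Part (i)
   follows because C commutes with B; part (ii) follows by taking Y the complement of X_r, since
   the conditional expectation E_{X_r} fixes C and does not increase the norm. *)

section \<open>The Banach algebra of operators on a finite-dimensional complex space\<close>

text \<open>Matrices carry no algebra norm in the library, so the exponential series of
  \<open>Transcendental\<close> is applied in this copy of the bounded operators, which is a real Banach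
  algebra under composition and the operator norm.\<close>

typedef (overloaded) ('n::finite) cop = "UNIV :: ((complex^'n) \<Rightarrow>\<^sub>L (complex^'n)) set"
  morphisms bl_of cop_of by simp

setup_lifting type_definition_cop

instantiation cop :: (finite) real_normed_algebra_1
begin
lift_definition zero_cop :: "'a cop" is 0 .
lift_definition one_cop :: "'a cop" is id_blinfun .
lift_definition plus_cop :: "'a cop \<Rightarrow> 'a cop \<Rightarrow> 'a cop" is "(+)" .
lift_definition minus_cop :: "'a cop \<Rightarrow> 'a cop \<Rightarrow> 'a cop" is "(-)" .
lift_definition uminus_cop :: "'a cop \<Rightarrow> 'a cop" is "uminus" .
lift_definition times_cop :: "'a cop \<Rightarrow> 'a cop \<Rightarrow> 'a cop" is "(o\<^sub>L)" .
lift_definition scaleR_cop :: "real \<Rightarrow> 'a cop \<Rightarrow> 'a cop" is "scaleR" .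
lift_definition norm_cop :: "'a cop \<Rightarrow> real" is norm .
definition dist_cop :: "'a cop \<Rightarrow> 'a cop \<Rightarrow> real" where "dist_cop a b = norm (a - b)"
definition uniformity_cop :: "('a cop \<times> 'a cop) filter" where
  "uniformity_cop = (INF e\<in>{0 <..}. principal {(x, y). dist x y < e})"
definition open_cop :: "'a cop set \<Rightarrow> bool" where
  "open_cop S = (\<forall>x\<in>S. \<forall>\<^sub>F (x', y) in uniformity. x' = x \<longrightarrow> y \<in> S)"
definition sgn_cop :: "'a cop \<Rightarrow> 'a cop" where "sgn_cop x = scaleR (inverse (norm x)) x"
instance
proof
  fix a b c :: "'a cop" and r s :: real
  show "a * b * c = a * (b * c)" by transfer (auto intro: blinfun_eqI)
  show "(a + b) * c = a * c + b * c" by transfer (auto intro: blinfun_eqI simp: blinfun.bilinear_simps)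
  show "a * (b + c) = a * b + a * c" by transfer (auto intro: blinfun_eqI simp: blinfun.bilinear_simps)
  show "1 * a = a" by transfer (auto intro: blinfun_eqI)
  show "a * 1 = a" by transfer (auto intro: blinfun_eqI)
  show "(0::'a cop) \<noteq> 1" apply transfer
    by (metis blinfun.zero_left blinfun_apply_id_blinfun axis_nth zero_index zero_neq_one)
  show "r *\<^sub>R a * b = r *\<^sub>R (a * b)" by transfer (auto intro: blinfun_eqI simp: blinfun.bilinear_simps)
  show "a * r *\<^sub>R b = r *\<^sub>R (a * b)" by transfer (auto intro: blinfun_eqI simp: blinfun.bilinear_simps)
  show "norm (a * b) \<le> norm a * norm b" by transfer (rule norm_blinfun_compose)
  show "norm (1::'a cop) = 1" by transfer (rule norm_blinfun_id)
  show "a + b + c = a + (b + c)" by transfer simp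
  show "a + b = b + a" by transfer simp
  show "0 + a = a" by transfer simp
  show "- a + a = 0" by transfer simp
  show "a - b = a + - b" by transfer simp
  show "r *\<^sub>R (a + b) = r *\<^sub>R a + r *\<^sub>R b" by transfer (simp add: scaleR_add_right)
  show "(r + s) *\<^sub>R a = r *\<^sub>R a + s *\<^sub>R a" by transfer (simp add: scaleR_add_left)
  show "r *\<^sub>R s *\<^sub>R a = (r * s) *\<^sub>R a" by transfer simp
  show "1 *\<^sub>R a = a" by transfer simp
  show "dist a b = norm (a - b)" by (simp add: dist_cop_def)
  show "sgn a = inverse (norm a) *\<^sub>R a" by (simp add: sgn_cop_def)
  show "(uniformity :: ('a cop \<times> 'a cop) filter) = (INF e\<in>{0 <..}. principal {(x, y). dist x y < e})"
    by (simp add: uniformity_cop_def)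
  show "open U = (\<forall>x\<in>U. \<forall>\<^sub>F (x', y) in uniformity. x' = x \<longrightarrow> y \<in> U)" for U :: "'a cop set"
    by (simp add: open_cop_def)
  show "(norm a = 0) = (a = 0)" by transfer simp
  show "norm (a + b) \<le> norm a + norm b" by transfer (rule norm_triangle_ineq)
  show "norm (r *\<^sub>R a) = \<bar>r\<bar> * norm a" by transfer simp
qed
end

lemma norm_cop_eq: "norm x = norm (bl_of x)"
  by transfer simp

instance cop :: (finite) banach
proof
  fix X :: "nat \<Rightarrow> 'a cop"
  have dist_eq: "dist x y = dist (bl_of x) (bl_of y)" for x y :: "'a cop"
    by (simp add: dist_cop_def dist_norm norm_cop_eq minus_cop.rep_eq)
  assume "Cauchy X"
  then have "Cauchy (\<lambda>n. bl_of (X n))"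
    unfolding Cauchy_def by (simp add: dist_eq)
  then obtain L where "(\<lambda>n. bl_of (X n)) \<longlonglongrightarrow> L"
    using Cauchy_convergent_iff convergent_def by blast
  then have "X \<longlonglongrightarrow> cop_of L"
    unfolding tendsto_iff by (simp add: dist_eq cop_of_inverse)
  then show "convergent X" by (auto simp: convergent_def)
qed

lemma cop_eqI: "(\<And>v. blinfun_apply (bl_of x) v = blinfun_apply (bl_of y) v) \<Longrightarrow> x = y"
  by (metis blinfun_eqI bl_of_inject)

lemma bounded_linear_apply_cop: "bounded_linear (\<lambda>x::'n::finite cop. blinfun_apply (bl_of x) v)"
proof (rule bounded_linear_intro[where K = "norm v"])
  fix a b :: "'n cop" and r :: real
  show "blinfun_apply (bl_of (a + b)) v = blinfun_apply (bl_of a) v + blinfun_apply (bl_of b) v"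
    by (simp add: plus_cop.rep_eq blinfun.bilinear_simps)
  show "blinfun_apply (bl_of (r *\<^sub>R a)) v = r *\<^sub>R blinfun_apply (bl_of a) v"
    by (simp add: scaleR_cop.rep_eq blinfun.bilinear_simps)
  show "norm (blinfun_apply (bl_of a) v) \<le> norm a * norm v"
    by (simp add: norm_cop_eq norm_blinfun)
qed

section \<open>Matrices as operators\<close>

lemma bounded_linear_matrix_vector_mult:
  "bounded_linear (\<lambda>v::complex^'n::finite. (M::complex^'n^'m::finite) *v v)"
proof -
  have "linear (\<lambda>v::complex^'n. M *v v)"
    by (rule linearI) (simp add: matrix_vector_right_distrib,
        simp add: vec_eq_iff matrix_vector_mult_def scaleR_sum_right mult_scaleR_right)
  then show ?thesis using linear_conv_bounded_linear by blast
qed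

lemma opnorm_apply_le: "norm ((M::complex^'n::finite^'m::finite) *v v) \<le> opnorm M * norm v"
  unfolding opnorm_def by (rule onorm[OF bounded_linear_matrix_vector_mult])

lemma opnorm_nonneg: "opnorm (M::complex^'n::finite^'m::finite) \<ge> 0"
  unfolding opnorm_def by (rule onorm_pos_le[OF bounded_linear_matrix_vector_mult])

definition cop_of_mat :: "complex^'n^'n \<Rightarrow> 'n::finite cop" where
  "cop_of_mat M = cop_of (Blinfun (\<lambda>v. M *v v))"

lemma cop_of_mat_apply [simp]: "blinfun_apply (bl_of (cop_of_mat M)) v = M *v v"
  by (simp add: cop_of_mat_def cop_of_inverse bounded_linear_Blinfun_apply
      bounded_linear_matrix_vector_mult)

lemma opnorm_eq_norm_cop: "opnorm M = norm (cop_of_mat M)"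
proof -
  have "blinfun_apply (bl_of (cop_of_mat M)) = (\<lambda>v. M *v v)" by auto
  then show ?thesis by (simp add: opnorm_def norm_cop_eq norm_blinfun.rep_eq)
qed

lemma cop_of_mat_mult: "cop_of_mat (M ** N) = cop_of_mat M * cop_of_mat N"
  by (rule cop_eqI) (simp add: times_cop.rep_eq matrix_vector_mul_assoc)

lemma cop_of_mat_one: "cop_of_mat (mat 1) = 1"
  by (rule cop_eqI) (simp add: one_cop.rep_eq)

lemma cop_of_mat_zero: "cop_of_mat 0 = 0"
  by (rule cop_eqI) (simp add: zero_cop.rep_eq)

lemma cop_of_mat_add: "cop_of_mat (M + N) = cop_of_mat M + cop_of_mat N"
  by (rule cop_eqI)
    (simp add: plus_cop.rep_eq blinfun.bilinear_simps matrix_vector_mult_add_rdistrib)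

lemma cop_of_mat_diff: "cop_of_mat (M - N) = cop_of_mat M - cop_of_mat N"
  by (rule cop_eqI)
    (simp add: minus_cop.rep_eq blinfun.bilinear_simps matrix_vector_mult_diff_rdistrib)

lemma cop_of_mat_scaleR: "cop_of_mat (r *\<^sub>R M) = r *\<^sub>R cop_of_mat M"
  by (rule cop_eqI) (simp add: scaleR_cop.rep_eq blinfun.bilinear_simps vec_eq_iff
      matrix_vector_mult_def scaleR_sum_right)

lemma cop_of_mat_sum: "cop_of_mat (sum f S) = (\<Sum>x\<in>S. cop_of_mat (f x))"
  by (induction S rule: infinite_finite_induct) (simp_all add: cop_of_mat_zero cop_of_mat_add)

lemma cop_of_mat_mpow: "cop_of_mat (mpow M k) = cop_of_mat M ^ k"
  by (induction k) (simp_all add: cop_of_mat_one cop_of_mat_mult)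

lemma opnorm_diff_le: "opnorm (M - N) \<le> opnorm M + opnorm (N :: complex^'n::finite^'n)"
  by (simp add: opnorm_eq_norm_cop cop_of_mat_diff norm_triangle_ineq4)

lemma opnorm_sum_le: "opnorm (sum f T) \<le> (\<Sum>Z\<in>T. opnorm (f Z :: complex^'n::finite^'n))"
  by (simp add: opnorm_eq_norm_cop cop_of_mat_sum norm_sum)

lemma opnorm_commutator_le:
  fixes B C D :: "complex^'n::finite^'n"
  assumes "C ** B = B ** C"
  shows "opnorm (commutator D B) \<le> 2 * opnorm (D - C) * opnorm B"
proof -
  let ?b = "cop_of_mat B" and ?d = "cop_of_mat D - cop_of_mat C"
  have "cop_of_mat C * ?b = ?b * cop_of_mat C"
    using assms by (simp add: cop_of_mat_mult[symmetric])
  then have "cop_of_mat (commutator D B) = ?d * ?b - ?b * ?d"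
    by (simp add: commutator_def cop_of_mat_diff cop_of_mat_mult algebra_simps)
  moreover have "norm (?d * ?b - ?b * ?d) \<le> norm ?d * norm ?b + norm ?b * norm ?d"
    by (intro order.trans[OF norm_triangle_ineq4] add_mono norm_mult_ineq)
  ultimately show ?thesis
    by (simp add: opnorm_eq_norm_cop cop_of_mat_diff mult_ac)
qed

definition mat_of_cop :: "'n::finite cop \<Rightarrow> complex^'n^'n" where
  "mat_of_cop x = (\<chi> i j. (blinfun_apply (bl_of x) (axis j 1)) $ i)"

lemma mat_of_cop_cop_of_mat: "mat_of_cop (cop_of_mat M) = M"
  by (simp add: mat_of_cop_def vec_eq_iff matrix_vector_mult_def axis_def
      if_distrib[of "\<lambda>x. _ * x"] cong: if_cong)

lemma mat_of_cop_scaleR: "mat_of_cop (r *\<^sub>R x) = r *\<^sub>R mat_of_cop x"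
  by (simp add: mat_of_cop_def vec_eq_iff scaleR_cop.rep_eq scaleR_blinfun.rep_eq)

lemma bounded_linear_mat_of_cop: "bounded_linear (mat_of_cop :: 'n::finite cop \<Rightarrow> _)"
proof (rule bounded_linear_intro[where K = "real (CARD('n) * CARD('n))"])
  fix x y :: "'n cop" and r :: real
  show "mat_of_cop (x + y) = mat_of_cop x + mat_of_cop y"
    by (simp add: mat_of_cop_def vec_eq_iff plus_cop.rep_eq plus_blinfun.rep_eq)
  show "mat_of_cop (r *\<^sub>R x) = r *\<^sub>R mat_of_cop x" by (rule mat_of_cop_scaleR)
  have entry: "norm (mat_of_cop x $ i $ j) \<le> norm x" for i j
  proof -
    have "norm (mat_of_cop x $ i $ j) \<le> norm (blinfun_apply (bl_of x) (axis j 1))"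
      unfolding mat_of_cop_def by (simp only: vec_lambda_beta Finite_Cartesian_Product.norm_nth_le)
    also have "\<dots> \<le> norm (bl_of x) * norm (axis j (1::complex))" by (rule norm_blinfun)
    finally show ?thesis by (simp add: norm_cop_eq norm_axis_1)
  qed
  have "norm (mat_of_cop x) \<le> (\<Sum>i\<in>UNIV. norm (mat_of_cop x $ i))"
    unfolding norm_vec_def by (rule L2_set_le_sum) simp
  also have "\<dots> \<le> (\<Sum>i\<in>(UNIV::'n set). \<Sum>j\<in>(UNIV::'n set). norm (mat_of_cop x $ i $ j))"
    by (intro sum_mono) (unfold norm_vec_def, rule L2_set_le_sum, simp)
  also have "\<dots> \<le> (\<Sum>i\<in>(UNIV::'n set). \<Sum>j\<in>(UNIV::'n set). norm x)"
    by (intro sum_mono entry)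
  finally show "norm (mat_of_cop x) \<le> norm x * real (CARD('n) * CARD('n))"
    by (simp add: mult_ac)
qed

lemma summable_mexp_series: "summable (\<lambda>k. (1 / fact k) *\<^sub>R mpow (M::complex^'n::finite^'n) k)"
proof -
  have "summable (\<lambda>k. mat_of_cop ((cop_of_mat M)^k /\<^sub>R fact k))"
    using bounded_linear.summable[OF bounded_linear_mat_of_cop summable_exp_generic] .
  moreover have "mat_of_cop ((cop_of_mat M)^k /\<^sub>R fact k) = (1 / fact k) *\<^sub>R mpow M k" for k
    by (simp add: cop_of_mat_mpow[symmetric] mat_of_cop_cop_of_mat mat_of_cop_scaleR divide_inverse)
  ultimately show ?thesis by simp
qed

lemma cop_of_mat_mexp: "cop_of_mat (mexp M) = exp (cop_of_mat M)"
proof -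
  have "linear (cop_of_mat :: complex^'n^'n \<Rightarrow> 'n cop)"
    by (rule linearI) (simp_all add: cop_of_mat_add cop_of_mat_scaleR)
  then have "cop_of_mat (mexp M) = (\<Sum>k. cop_of_mat ((1 / fact k) *\<^sub>R mpow M k))"
    unfolding mexp_def
    by (intro bounded_linear.suminf summable_mexp_series) (simp add: linear_conv_bounded_linear)
  also have "\<dots> = (\<Sum>k. (cop_of_mat M)^k /\<^sub>R fact k)"
    by (simp add: cop_of_mat_scaleR cop_of_mat_mpow divide_inverse)
  finally show ?thesis by (simp add: exp_def)
qed

section \<open>Exponentials of skew operators\<close>

definition skew :: "'n::finite cop \<Rightarrow> bool" where
  "skew x \<longleftrightarrow> (\<forall>v. inner (blinfun_apply (bl_of x) v) v = 0)"

lemma exp_mult_commute: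
  fixes x y :: "'a::{real_normed_algebra_1,banach}"
  assumes "x * y = y * x"
  shows "exp x * y = y * exp x"
proof -
  have s: "summable (\<lambda>n. x^n /\<^sub>R fact n)" by (rule summable_exp_generic)
  have "exp x * y = (\<Sum>n. x^n /\<^sub>R fact n * y)"
    unfolding exp_def by (rule suminf_mult2[OF s])
  also have "\<dots> = (\<Sum>n. y * (x^n /\<^sub>R fact n))"
    by (simp add: power_commuting_commutes[OF assms])
  also have "\<dots> = y * exp x"
    unfolding exp_def by (rule suminf_mult[OF s])
  finally show ?thesis .
qed

lemma has_derivative_exp_scaleR_apply:
  fixes x :: "'n::finite cop"
  shows "((\<lambda>s. blinfun_apply (bl_of (exp (s *\<^sub>R x))) v) has_derivative
     (\<lambda>h. h *\<^sub>R blinfun_apply (bl_of x) (blinfun_apply (bl_of (exp (s *\<^sub>R x))) v))) (at s)"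
proof -
  have "((\<lambda>s. exp (s *\<^sub>R x)) has_derivative (\<lambda>h. h *\<^sub>R (x * exp (s *\<^sub>R x)))) (at s)"
    using exp_scaleR_has_vector_derivative_left[of x s] unfolding has_vector_derivative_def .
  from bounded_linear.has_derivative[OF bounded_linear_apply_cop this]
  show ?thesis by (simp add: scaleR_cop.rep_eq times_cop.rep_eq blinfun.bilinear_simps)
qed

lemma skew_exp_isometry:
  fixes x :: "'n::finite cop"
  assumes "skew x"
  shows "norm (blinfun_apply (bl_of (exp (s *\<^sub>R x))) v) = norm v"
proof -
  let ?f = "\<lambda>s. blinfun_apply (bl_of (exp (s *\<^sub>R x))) v"
  have "((\<lambda>s. inner (?f s) (?f s)) has_derivative (\<lambda>h. 0)) (at s within UNIV)" for s
  proof -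
    have "((\<lambda>s. inner (?f s) (?f s)) has_derivative
      (\<lambda>h. inner (?f s) (h *\<^sub>R blinfun_apply (bl_of x) (?f s))
         + inner (h *\<^sub>R blinfun_apply (bl_of x) (?f s)) (?f s))) (at s)"
      by (rule has_derivative_inner[OF has_derivative_exp_scaleR_apply has_derivative_exp_scaleR_apply])
    moreover have "inner (blinfun_apply (bl_of x) (?f s)) (?f s) = 0"
      using assms unfolding skew_def by blast
    ultimately show ?thesis by (simp add: inner_commute)
  qed
  then obtain c where "\<forall>s\<in>UNIV. inner (?f s) (?f s) = c"
    using has_derivative_zero_constant[of UNIV] by blast
  then have "inner (?f s) (?f s) = inner (?f 0) (?f 0)" by (metis UNIV_I)
  also have "?f 0 = v" by (simp add: one_cop.rep_eq)
  finally show ?thesis by (simp add: norm_eq_sqrt_inner)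
qed

lemma skew_norm_exp_le:
  fixes x :: "'n::finite cop"
  assumes "skew x"
  shows "norm (exp (s *\<^sub>R x)) \<le> 1"
  unfolding norm_cop_eq by (rule norm_blinfun_bound) (simp_all add: skew_exp_isometry[OF assms])

lemma skew_norm_exp_minus_one_le:
  fixes x :: "'n::finite cop"
  assumes "skew x"
  shows "norm (exp (s *\<^sub>R x) - 1) \<le> \<bar>s\<bar> * norm x"
proof -
  have deriv: "((\<lambda>u. exp (u *\<^sub>R x)) has_derivative (\<lambda>h. h *\<^sub>R (x * exp (u *\<^sub>R x))))
      (at u within UNIV)" for u
    using exp_scaleR_has_vector_derivative_left[of x u] unfolding has_vector_derivative_def .
  have bound: "onorm (\<lambda>h::real. h *\<^sub>R (x * exp (u *\<^sub>R x))) \<le> norm x" for u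
  proof -
    have "onorm (\<lambda>h::real. h *\<^sub>R (x * exp (u *\<^sub>R x))) = norm (x * exp (u *\<^sub>R x))"
      by (simp add: onorm_scaleR_left[OF bounded_linear_ident] onorm_id)
    also have "\<dots> \<le> norm x * norm (exp (u *\<^sub>R x))" by (rule norm_mult_ineq)
    also have "\<dots> \<le> norm x" using skew_norm_exp_le[OF assms] by (simp add: mult_left_le)
    finally show ?thesis .
  qed
  have "norm (exp (s *\<^sub>R x) - exp (0 *\<^sub>R x)) \<le> norm x * norm (s - 0)"
    by (rule differentiable_bound[of UNIV, OF _ deriv bound]) simp_all
  then show ?thesis by (simp add: mult.commute)
qed

lemma skew_norm_conj_le:
  fixes x c :: "'n::finite cop"
  assumes "skew x"
  shows "norm (exp (s *\<^sub>R x) * c * exp ((- s) *\<^sub>R x)) \<le> norm c"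
proof -
  have "norm (exp (s *\<^sub>R x) * c * exp ((- s) *\<^sub>R x))
      \<le> norm (exp (s *\<^sub>R x)) * norm c * norm (exp ((- s) *\<^sub>R x))"
    by (intro order.trans[OF norm_mult_ineq] mult_right_mono norm_mult_ineq norm_ge_zero)
  also have "\<dots> \<le> 1 * norm c * 1"
    by (intro mult_mono skew_norm_exp_le assms) simp_all
  finally show ?thesis by simp
qed

lemma skew_norm_conj_diff_le:
  fixes x c :: "'n::finite cop"
  assumes "skew x"
  shows "norm (exp (s *\<^sub>R x) * c * exp ((- s) *\<^sub>R x) - c) \<le> 2 * \<bar>s\<bar> * norm x * norm c"
proof -
  let ?U = "exp (s *\<^sub>R x)" and ?V = "exp ((- s) *\<^sub>R x)"
  have "norm ((?U - 1) * c * ?V) \<le> norm (?U - 1) * norm c * norm ?V"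
    by (intro order.trans[OF norm_mult_ineq] mult_right_mono norm_mult_ineq norm_ge_zero)
  also have "\<dots> \<le> (\<bar>s\<bar> * norm x) * norm c * 1"
    by (intro mult_mono skew_norm_exp_minus_one_le skew_norm_exp_le assms) simp_all
  finally have left: "norm ((?U - 1) * c * ?V) \<le> \<bar>s\<bar> * norm x * norm c" by simp
  have "norm (c * (?V - 1)) \<le> norm c * (\<bar>- s\<bar> * norm x)"
    by (intro order.trans[OF norm_mult_ineq] mult_left_mono skew_norm_exp_minus_one_le assms) simp
  then have right: "norm (c * (?V - 1)) \<le> \<bar>s\<bar> * norm x * norm c" by (simp add: mult_ac)
  have split: "?U * c * ?V - c = (?U - 1) * c * ?V + c * (?V - 1)"
    by (simp add: algebra_simps)
  show ?thesis unfolding split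
    using norm_triangle_ineq[of "(?U - 1) * c * ?V" "c * (?V - 1)"] left right by linarith
qed

definition i_op :: "complex^'n^'n \<Rightarrow> 'n::finite cop" where
  "i_op M = cop_of_mat (cscale \<i> M)"

lemma cscale_mult_left: "cscale c M ** N = cscale c (M ** N)"
  by (simp add: vec_eq_iff cscale_def matrix_matrix_mult_def sum_distrib_left mult.assoc)

lemma cscale_mult_right: "M ** cscale c N = cscale c (M ** N)"
  by (simp add: vec_eq_iff cscale_def matrix_matrix_mult_def sum_distrib_left mult_ac)

lemma i_op_add: "i_op (M + N) = i_op M + i_op N"
proof -
  have "cscale \<i> (M + N) = cscale \<i> M + cscale \<i> N"
    by (simp add: vec_eq_iff cscale_def distrib_left)
  then show ?thesis by (simp add: i_op_def cop_of_mat_add)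
qed

lemma i_op_sum: "i_op (sum f S) = (\<Sum>x\<in>S. i_op (f x))"
proof -
  have "cscale \<i> (sum f S) = (\<Sum>x\<in>S. cscale \<i> (f x))"
    by (simp add: vec_eq_iff cscale_def sum_component sum_distrib_left)
  then show ?thesis by (simp add: i_op_def cop_of_mat_sum)
qed

lemma i_op_commute: "M ** N = N ** M \<Longrightarrow> i_op M * i_op N = i_op N * i_op M"
  by (simp add: i_op_def cop_of_mat_mult[symmetric] cscale_mult_left cscale_mult_right)

lemma i_op_commute_cop_of_mat:
  "M ** A = A ** M \<Longrightarrow> i_op M * cop_of_mat A = cop_of_mat A * i_op M"
  by (simp add: i_op_def cop_of_mat_mult[symmetric] cscale_mult_left cscale_mult_right)

lemma norm_i_op: "norm (i_op (M::complex^'n::finite^'n)) = opnorm M"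
proof -
  have "cscale \<i> M *v v = (\<chi> j. \<i> * (M *v v) $ j)" for v :: "complex^'n"
    by (simp add: vec_eq_iff matrix_vector_mult_def cscale_def sum_distrib_left mult.assoc)
  then have "norm (cscale \<i> M *v v) = norm (M *v v)" for v :: "complex^'n"
    by (simp add: norm_vec_def norm_mult)
  then show ?thesis by (simp add: i_op_def opnorm_eq_norm_cop[symmetric] opnorm_def onorm_def)
qed

lemma cop_of_mat_conj_mexp:
  "cop_of_mat (mexp (cscale (\<i> * of_real t) H) ** A ** mexp (cscale (- \<i> * of_real t) H))
     = exp (t *\<^sub>R i_op H) * cop_of_mat A * exp ((- t) *\<^sub>R i_op H)"
proof -
  have plus: "cscale (\<i> * of_real t) H = t *\<^sub>R cscale \<i> H"
    and minus: "cscale (- \<i> * of_real t) H = (- t) *\<^sub>R cscale \<i> H"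
    by (simp_all add: vec_eq_iff cscale_def) (simp_all add: scaleR_conv_of_real mult_ac)
  show ?thesis
    by (simp only: plus minus cop_of_mat_mult cop_of_mat_mexp cop_of_mat_scaleR i_op_def)
qed

lemma inner_vec_complex: "inner (x::complex^'n) y = Re (\<Sum>i\<in>UNIV. x $ i * cnj (y $ i))"
  by (simp add: inner_vec_def inner_complex_def Re_sum)

lemma skew_i_op:
  fixes K :: "complex^'n::finite^'n"
  assumes "self_adjoint K"
  shows "skew (i_op K)"
  unfolding skew_def
proof
  fix v :: "complex^'n"
  have K: "cnj (K $ i $ j) = K $ j $ i" for i j
  proof -
    have "cadj K $ j $ i = K $ j $ i" using assms by (simp add: self_adjoint_def)
    then show ?thesis by (simp add: cadj_def)
  qed
  define S where "S = (\<Sum>i\<in>UNIV. \<Sum>j\<in>UNIV. K $ i $ j * v $ j * cnj (v $ i))"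
  have "cnj S = (\<Sum>i\<in>UNIV. \<Sum>j\<in>UNIV. K $ j $ i * cnj (v $ j) * v $ i)"
    by (simp add: S_def K)
  also have "\<dots> = S" unfolding S_def
    by (subst sum.swap) (simp add: mult_ac)
  finally have "S \<in> \<real>" by (metis Reals_cnj_iff)
  have "(cscale \<i> K *v v) $ i = \<i> * (\<Sum>j\<in>UNIV. K $ i $ j * v $ j)" for i
    by (simp add: matrix_vector_mult_def cscale_def sum_distrib_left mult.assoc)
  then have "inner (blinfun_apply (bl_of (i_op K)) v) v = Re (\<i> * S)"
    by (simp add: i_op_def inner_vec_complex S_def sum_distrib_left sum_distrib_right mult.assoc)
  also have "\<dots> = 0" using \<open>S \<in> \<real>\<close> by (auto elim: Reals_cases)
  finally show "inner (blinfun_apply (bl_of (i_op K)) v) v = 0" .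
qed

section \<open>Local algebras\<close>

definition agree_outside :: "'a set \<Rightarrow> ('a \<Rightarrow> 'q) \<Rightarrow> ('a \<Rightarrow> 'q) \<Rightarrow> bool" where
  "agree_outside S \<sigma> \<tau> \<longleftrightarrow> (\<forall>x. x \<notin> S \<longrightarrow> \<sigma> x = \<tau> x)"

definition join :: "'a set \<Rightarrow> ('a \<Rightarrow> 'q) \<Rightarrow> ('a \<Rightarrow> 'q) \<Rightarrow> ('a \<Rightarrow> 'q)" where
  "join S \<sigma> \<rho> = (\<lambda>x. if x \<in> S then \<sigma> x else \<rho> x)"

lemma embed_entry:
  "embed Z a $ \<sigma> $ \<tau> = (if agree_outside Z \<sigma> \<tau> then a (restr Z \<sigma>) (restr Z \<tau>) else 0)"
  by (simp add: embed_def agree_outside_def)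

lemma embed_mult_disjoint:
  fixes a b :: "('a::finite \<Rightarrow> 'q::finite) \<Rightarrow> ('a \<Rightarrow> 'q) \<Rightarrow> complex"
  assumes "Z \<inter> X = {}"
  shows "embed Z a ** embed X b = (\<chi> \<sigma> \<tau>. if agree_outside (Z \<union> X) \<sigma> \<tau>
           then a (restr Z \<sigma>) (restr Z \<tau>) * b (restr X \<sigma>) (restr X \<tau>) else 0)"
proof -
  have "(\<Sum>\<rho>\<in>UNIV. embed Z a $ \<sigma> $ \<rho> * embed X b $ \<rho> $ \<tau>) =
     (if agree_outside (Z \<union> X) \<sigma> \<tau> then a (restr Z \<sigma>) (restr Z \<tau>) * b (restr X \<sigma>) (restr X \<tau>)
      else 0)" for \<sigma> \<tau>
  proof -
    text \<open>Only the configuration equal to \<open>\<tau>\<close> on \<open>Z\<close> and to \<open>\<sigma>\<close> elsewhere contributes.\<close>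
    define \<rho>0 where "\<rho>0 = join Z \<tau> \<sigma>"
    have other: "embed Z a $ \<sigma> $ \<rho> * embed X b $ \<rho> $ \<tau> = 0" if ne: "\<rho> \<noteq> \<rho>0" for \<rho>
    proof -
      obtain x where "\<rho> x \<noteq> join Z \<tau> \<sigma> x" using ne unfolding \<rho>0_def fun_eq_iff by blast
      then have "\<not> (agree_outside Z \<sigma> \<rho> \<and> agree_outside X \<rho> \<tau>)"
        using assms by (cases "x \<in> Z") (auto simp: agree_outside_def join_def)
      then show ?thesis by (auto simp: embed_entry)
    qed
    have "restr Z \<rho>0 = restr Z \<tau>" "restr X \<rho>0 = restr X \<sigma>" "agree_outside Z \<sigma> \<rho>0"
      "agree_outside X \<rho>0 \<tau> \<longleftrightarrow> agree_outside (Z \<union> X) \<sigma> \<tau>"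
      using assms by (auto simp: restr_def \<rho>0_def join_def agree_outside_def fun_eq_iff)
    then have "embed Z a $ \<sigma> $ \<rho>0 * embed X b $ \<rho>0 $ \<tau> =
      (if agree_outside (Z \<union> X) \<sigma> \<tau> then a (restr Z \<sigma>) (restr Z \<tau>) * b (restr X \<sigma>) (restr X \<tau>)
       else 0)"
      by (simp add: embed_entry)
    moreover have "(\<Sum>\<rho>\<in>UNIV. embed Z a $ \<sigma> $ \<rho> * embed X b $ \<rho> $ \<tau>)
        = (\<Sum>\<rho>\<in>{\<rho>0}. embed Z a $ \<sigma> $ \<rho> * embed X b $ \<rho> $ \<tau>)"
      by (rule sum.mono_neutral_right) (auto simp: other)
    ultimately show ?thesis by simp
  qed
  then show ?thesis by (simp add: vec_eq_iff matrix_matrix_mult_def)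
qed

lemma local_alg_commute:
  assumes "Z \<inter> X = {}" "A \<in> local_alg Z" "B \<in> local_alg X"
  shows "A ** B = B ** A"
proof -
  obtain a b where A: "A = embed Z a" and B: "B = embed X b"
    using assms by (auto simp: local_alg_def)
  have "X \<inter> Z = {}" using assms by blast
  then show ?thesis
    unfolding A B embed_mult_disjoint[OF assms(1)] embed_mult_disjoint[OF \<open>X \<inter> Z = {}\<close>]
    by (auto simp: Un_commute mult.commute vec_eq_iff)
qed

lemma restr_join: "restr S (join S \<sigma> \<rho>) = restr S \<sigma>"
  by (auto simp: restr_def join_def)

lemma embed_mult:
  fixes a b :: "('a::finite \<Rightarrow> 'q::finite) \<Rightarrow> ('a \<Rightarrow> 'q) \<Rightarrow> complex"
  shows "embed S a ** embed S b = embed S (\<lambda>\<mu> \<nu>. \<Sum>\<kappa>\<in>configs_on S. a \<mu> \<kappa> * b \<kappa> \<nu>)"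
proof -
  have "(\<Sum>\<rho>\<in>UNIV. embed S a $ \<sigma> $ \<rho> * embed S b $ \<rho> $ \<tau>)
      = embed S (\<lambda>\<mu> \<nu>. \<Sum>\<kappa>\<in>configs_on S. a \<mu> \<kappa> * b \<kappa> \<nu>) $ \<sigma> $ \<tau>" for \<sigma> \<tau>
  proof (cases "agree_outside S \<sigma> \<tau>")
    case True
    let ?R = "{\<rho>. agree_outside S \<sigma> \<rho>}"
    have "(\<Sum>\<rho>\<in>UNIV. embed S a $ \<sigma> $ \<rho> * embed S b $ \<rho> $ \<tau>) = (\<Sum>\<rho>\<in>UNIV.
        if \<rho> \<in> ?R then a (restr S \<sigma>) (restr S \<rho>) * b (restr S \<rho>) (restr S \<tau>) else 0)"
      using True by (intro sum.cong) (auto simp: embed_entry agree_outside_def)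
    also have "\<dots> = (\<Sum>\<rho>\<in>?R. a (restr S \<sigma>) (restr S \<rho>) * b (restr S \<rho>) (restr S \<tau>))"
      by (simp add: sum.If_cases)
    also have "\<dots> = (\<Sum>\<kappa>\<in>configs_on S. a (restr S \<sigma>) \<kappa> * b \<kappa> (restr S \<tau>))"
      by (rule sum.reindex_bij_witness[where i = "\<lambda>\<kappa>. join S \<kappa> \<sigma>" and j = "restr S"])
        (auto simp: configs_on_def restr_def join_def agree_outside_def)
    finally show ?thesis using True by (simp add: embed_entry)
  next
    case False
    then have zero: "embed S a $ \<sigma> $ \<rho> * embed S b $ \<rho> $ \<tau> = 0" for \<rho>
      by (auto simp: embed_entry agree_outside_def)
    have "(\<Sum>\<rho>\<in>UNIV. embed S a $ \<sigma> $ \<rho> * embed S b $ \<rho> $ \<tau>) = 0"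
      by (intro sum.neutral) (simp add: zero)
    with False show ?thesis by (simp add: embed_entry)
  qed
  then show ?thesis by (simp add: vec_eq_iff matrix_matrix_mult_def)
qed

lemma local_alg_mult: "A \<in> local_alg S \<Longrightarrow> B \<in> local_alg S \<Longrightarrow> A ** B \<in> local_alg S"
  by (auto simp: local_alg_def embed_mult)

lemma local_alg_one: "(mat 1 :: ('a::finite,'q::finite) obs) \<in> local_alg S"
proof -
  have "mat 1 $ \<sigma> $ \<tau> = embed S (\<lambda>\<mu> \<nu>. if \<mu> = \<nu> then 1 else 0) $ \<sigma> $ \<tau>"
    for \<sigma> \<tau> :: "'a \<Rightarrow> 'q"
  proof -
    have "(\<sigma> = \<tau>) \<longleftrightarrow> agree_outside S \<sigma> \<tau> \<and> restr S \<sigma> = restr S \<tau>"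
      by (auto simp: restr_def agree_outside_def fun_eq_iff)
    then show ?thesis by (auto simp: embed_entry mat_def)
  qed
  then have "(mat 1 :: ('a,'q) obs) = embed S (\<lambda>\<mu> \<nu>. if \<mu> = \<nu> then 1 else 0)"
    by (simp add: vec_eq_iff)
  then show ?thesis by (simp add: local_alg_def)
qed

lemma subspace_local_alg: "subspace (local_alg S :: ('a::finite,'q::finite) obs set)"
  unfolding subspace_def
proof (intro conjI ballI allI)
  show "0 \<in> local_alg S"
    by (auto simp: local_alg_def vec_eq_iff embed_entry intro!: image_eqI[where x = "\<lambda>_ _. 0"])
  fix A B :: "('a,'q) obs" assume "A \<in> local_alg S" "B \<in> local_alg S"
  then obtain a b where "A = embed S a" "B = embed S b" by (auto simp: local_alg_def)
  then show "A + B \<in> local_alg S"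
    by (auto simp: local_alg_def vec_eq_iff embed_entry
        intro!: image_eqI[where x = "\<lambda>x y. a x y + b x y"])
next
  fix c :: real and A :: "('a,'q) obs" assume "A \<in> local_alg S"
  then obtain a where "A = embed S a" by (auto simp: local_alg_def)
  then show "c *\<^sub>R A \<in> local_alg S"
    by (auto simp: local_alg_def vec_eq_iff embed_entry
        intro!: image_eqI[where x = "\<lambda>x y. c *\<^sub>R a x y"])
qed

lemma local_alg_mono:
  assumes "Z \<subseteq> S"
  shows "(local_alg Z :: ('a::finite,'q::finite) obs set) \<subseteq> local_alg S"
proof
  fix A :: "('a,'q) obs" assume "A \<in> local_alg Z"
  then obtain a where A: "A = embed Z a" by (auto simp: local_alg_def)
  let ?b = "\<lambda>\<mu> \<nu>. if agree_outside Z \<mu> \<nu> then a (restr Z \<mu>) (restr Z \<nu>) else 0"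
  have restr_restr: "restr Z (restr S \<sigma>) = restr Z \<sigma>" for \<sigma> :: "'a \<Rightarrow> 'q"
    using assms by (auto simp: restr_def fun_eq_iff)
  have "embed Z a $ \<sigma> $ \<tau> = embed S ?b $ \<sigma> $ \<tau>" for \<sigma> \<tau>
  proof -
    have "agree_outside Z \<sigma> \<tau> \<longleftrightarrow>
        agree_outside S \<sigma> \<tau> \<and> agree_outside Z (restr S \<sigma>) (restr S \<tau>)"
      using assms by (auto simp: restr_def agree_outside_def)
    then show ?thesis unfolding embed_entry restr_restr by auto
  qed
  then have "embed Z a = embed S ?b"
    by (simp add: vec_eq_iff)
  then show "A \<in> local_alg S" by (simp add: A local_alg_def)
qed

lemma local_alg_sum: "(\<And>x. x \<in> T \<Longrightarrow> f x \<in> local_alg S) \<Longrightarrow> sum f T \<in> local_alg S"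
  by (rule subspace_sum[OF subspace_local_alg])

lemma local_alg_cscale: "M \<in> local_alg S \<Longrightarrow> cscale c M \<in> local_alg S"
proof -
  have "cscale c (embed S a) = embed S (\<lambda>x y. c * a x y)" for a
    by (auto simp: vec_eq_iff embed_entry cscale_def)
  then show "M \<in> local_alg S \<Longrightarrow> cscale c M \<in> local_alg S"
    by (auto simp: local_alg_def)
qed

lemma local_alg_mexp:
  assumes "M \<in> local_alg S"
  shows "mexp M \<in> local_alg S"
proof -
  have "mpow M k \<in> local_alg S" for k
    by (induction k) (simp_all add: local_alg_one local_alg_mult assms)
  then have "(\<Sum>k<n. (1 / fact k) *\<^sub>R mpow M k) \<in> local_alg S" for n
    by (intro local_alg_sum subspace_scale[OF subspace_local_alg])
  moreover have "(\<lambda>n. \<Sum>k<n. (1 / fact k) *\<^sub>R mpow M k) \<longlonglongrightarrow> mexp M"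
    unfolding mexp_def by (rule summable_LIMSEQ[OF summable_mexp_series])
  ultimately show ?thesis
    by (rule closed_sequentially[OF closed_subspace[OF subspace_local_alg]])
qed

section \<open>The conditional expectation\<close>

lemma finite_configs_on: "finite (configs_on Z :: ('a::finite \<Rightarrow> 'q::finite) set)"
  by (rule finite_subset[OF subset_UNIV]) simp

lemma card_configs_on_pos: "card (configs_on Z :: ('a::finite \<Rightarrow> 'q::finite) set) > 0"
proof -
  have "(\<lambda>_. undefined) \<in> configs_on Z" by (simp add: configs_on_def)
  then show ?thesis using finite_configs_on card_gt_0_iff by blast
qed

lemma cond_exp_entry:
  "cond_exp S (D :: ('a::finite,'q::finite) obs) $ \<sigma> $ \<tau> = (if agree_outside S \<sigma> \<tau> then
     (\<Sum>\<rho>\<in>configs_on (- S). D $ join S \<sigma> \<rho> $ join S \<tau> \<rho>)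
       / of_nat (card (configs_on (- S) :: ('a \<Rightarrow> 'q) set)) else 0)"
proof -
  have "(\<lambda>x. if x \<in> S then restr S \<sigma> x else \<rho> x) = join S \<sigma> \<rho>" for \<sigma> \<rho> :: "'a \<Rightarrow> 'q"
    by (auto simp: restr_def join_def)
  then show ?thesis by (simp add: cond_exp_def embed_entry)
qed

lemma cond_exp_local_alg:
  fixes M :: "('a::finite,'q::finite) obs"
  assumes "M \<in> local_alg S"
  shows "cond_exp S M = M"
proof -
  obtain a where M: "M = embed S a" using assms by (auto simp: local_alg_def)
  let ?N = "card (configs_on (- S) :: ('a \<Rightarrow> 'q) set)"
  have "cond_exp S M $ \<sigma> $ \<tau> = M $ \<sigma> $ \<tau>" for \<sigma> \<tau>
  proof (cases "agree_outside S \<sigma> \<tau>")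
    case True
    have "agree_outside S (join S \<sigma> \<rho>) (join S \<tau> \<rho>)" for \<rho>
      by (simp add: agree_outside_def join_def)
    then have "(\<Sum>\<rho>\<in>configs_on (- S). M $ join S \<sigma> \<rho> $ join S \<tau> \<rho>)
        = of_nat ?N * a (restr S \<sigma>) (restr S \<tau>)"
      by (simp add: M embed_entry restr_join)
    moreover have "configs_on (- S) \<noteq> ({} :: ('a \<Rightarrow> 'q) set)"
      using card_configs_on_pos[of "- S"] by (metis card.empty less_irrefl)
    ultimately show ?thesis
      using True by (simp add: cond_exp_entry M embed_entry)
  next
    case False
    then show ?thesis by (simp add: cond_exp_entry M embed_entry)
  qed
  then show ?thesis by (simp add: vec_eq_iff)
qed

lemma cond_exp_diff:
  "cond_exp S (M - N) = cond_exp S M - cond_exp S (N :: ('a::finite,'q::finite) obs)"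
  by (simp add: vec_eq_iff cond_exp_entry sum_subtractf diff_divide_distrib)

text \<open>The configurations split into slices according to their values outside \<open>S\<close>. On each
  slice, \<open>E\<^sub>S(D)\<close> acts as the average over \<open>\<rho>\<close> of the block of \<open>D\<close> on the slice of \<open>\<rho>\<close>;
  \<open>moved_slice S v \<gamma> \<rho>\<close> carries the slice of \<open>\<gamma>\<close> of \<open>v\<close> to the slice of \<open>\<rho>\<close>, so that
  \<open>\<parallel>E\<^sub>S(D)\<parallel> \<le> \<parallel>D\<parallel>\<close> follows by Cauchy-Schwarz over the slices.\<close>

definition slice :: "'a set \<Rightarrow> complex^('a::finite \<Rightarrow> 'q::finite) \<Rightarrow> ('a \<Rightarrow> 'q) \<Rightarrow> complex^('a \<Rightarrow> 'q)"
  where "slice S v \<gamma> = (\<chi> \<sigma>. if agree_outside S \<sigma> \<gamma> then v $ \<sigma> else 0)"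

definition moved_slice ::
  "'a set \<Rightarrow> complex^('a::finite \<Rightarrow> 'q::finite) \<Rightarrow> ('a \<Rightarrow> 'q) \<Rightarrow> ('a \<Rightarrow> 'q) \<Rightarrow> complex^('a \<Rightarrow> 'q)"
  where "moved_slice S v \<gamma> \<rho> = (\<chi> \<kappa>. if agree_outside S \<kappa> \<rho> then v $ join S \<kappa> \<gamma> else 0)"

lemma sum_configs_on_agree_outside:
  fixes S :: "'a::finite set" and \<sigma> \<tau> :: "'a \<Rightarrow> 'q::finite" and c :: "'c::comm_monoid_add"
  shows "(\<Sum>\<gamma>\<in>configs_on (- S). if agree_outside S \<sigma> \<gamma> \<and> agree_outside S \<tau> \<gamma> then c else 0)
       = (if agree_outside S \<sigma> \<tau> then c else 0)"
proof -
  have "(agree_outside S \<sigma> \<gamma> \<and> agree_outside S \<tau> \<gamma>) \<longleftrightarrow>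
      (\<gamma> = restr (- S) \<sigma> \<and> agree_outside S \<sigma> \<tau>)" if "\<gamma> \<in> configs_on (- S)" for \<gamma>
    using that unfolding agree_outside_def configs_on_def restr_def by (auto simp: fun_eq_iff)
  then have "(\<Sum>\<gamma>\<in>configs_on (- S). if agree_outside S \<sigma> \<gamma> \<and> agree_outside S \<tau> \<gamma> then c else 0)
      = (\<Sum>\<gamma>\<in>configs_on (- S). if \<gamma> = restr (- S) \<sigma> then (if agree_outside S \<sigma> \<tau> then c else 0)
          else 0)"
    by (intro sum.cong) simp_all
  also have "\<dots> = (if agree_outside S \<sigma> \<tau> then c else 0)"
    by (simp add: configs_on_def restr_def)
  finally show ?thesis .
qed

lemma join_join: "agree_outside S \<kappa> \<rho> \<Longrightarrow> join S (join S \<kappa> \<gamma>) \<rho> = \<kappa>"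
  by (auto simp: agree_outside_def join_def fun_eq_iff)

lemma sum_agree_outside_reindex:
  "(\<Sum>\<sigma>\<in>{\<sigma>. agree_outside S \<sigma> \<gamma>}. f \<sigma>) = (\<Sum>\<kappa>\<in>{\<kappa>. agree_outside S \<kappa> \<rho>}. f (join S \<kappa> \<gamma>))"
  by (rule sum.reindex_bij_witness[where i = "\<lambda>\<kappa>. join S \<kappa> \<gamma>" and j = "\<lambda>\<sigma>. join S \<sigma> \<rho>"])
    (auto simp: join_join, auto simp: agree_outside_def join_def)

lemma norm_sq_vec: "(norm (x::complex^'n::finite))\<^sup>2 = (\<Sum>i\<in>UNIV. (norm (x $ i))\<^sup>2)"
  by (simp add: norm_vec_def L2_set_def sum_nonneg)

lemma norm_moved_slice:
  fixes v :: "complex^('a::finite \<Rightarrow> 'q::finite)"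
  shows "norm (moved_slice S v \<gamma> \<rho>) = norm (slice S v \<gamma>)"
proof -
  have "(norm (moved_slice S v \<gamma> \<rho>))\<^sup>2 = (\<Sum>\<kappa>\<in>{\<kappa>. agree_outside S \<kappa> \<rho>}. (norm (v $ join S \<kappa> \<gamma>))\<^sup>2)"
    by (simp add: norm_sq_vec moved_slice_def if_distrib[of "\<lambda>x. (norm x)\<^sup>2"] sum.If_cases)
  also have "\<dots> = (\<Sum>\<sigma>\<in>{\<sigma>. agree_outside S \<sigma> \<gamma>}. (norm (v $ \<sigma>))\<^sup>2)"
    by (rule sum_agree_outside_reindex[symmetric])
  also have "\<dots> = (norm (slice S v \<gamma>))\<^sup>2"
    by (simp add: norm_sq_vec slice_def if_distrib[of "\<lambda>x. (norm x)\<^sup>2"] sum.If_cases)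
  finally show ?thesis by (simp add: power2_eq_iff_nonneg)
qed

lemma sum_norm_slice_sq:
  fixes v :: "complex^('a::finite \<Rightarrow> 'q::finite)"
  shows "(\<Sum>\<gamma>\<in>configs_on (- S). (norm (slice S v \<gamma>))\<^sup>2) = (norm v)\<^sup>2"
proof -
  have "(\<Sum>\<gamma>\<in>configs_on (- S). (norm (slice S v \<gamma>))\<^sup>2) = (\<Sum>\<gamma>\<in>configs_on (- S). \<Sum>\<sigma>\<in>UNIV.
      if agree_outside S \<sigma> \<gamma> \<and> agree_outside S \<sigma> \<gamma> then (norm (v $ \<sigma>))\<^sup>2 else 0)"
    unfolding norm_sq_vec by (intro sum.cong refl) (simp add: slice_def)
  also have "\<dots> = (\<Sum>\<sigma>\<in>UNIV. \<Sum>\<gamma>\<in>configs_on (- S).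
      if agree_outside S \<sigma> \<gamma> \<and> agree_outside S \<sigma> \<gamma> then (norm (v $ \<sigma>))\<^sup>2 else 0)"
    by (rule sum.swap)
  also have "\<dots> = (norm v)\<^sup>2"
    unfolding sum_configs_on_agree_outside norm_sq_vec by (simp add: agree_outside_def)
  finally show ?thesis .
qed

lemma sum_if_and:
  fixes g :: "'b::finite \<Rightarrow> 'd::finite \<Rightarrow> 'c::comm_monoid_add"
  shows "(\<Sum>\<sigma>\<in>UNIV. \<Sum>\<tau>\<in>UNIV. if P \<sigma> \<and> Q \<tau> then g \<sigma> \<tau> else 0)
       = (\<Sum>\<sigma>\<in>{\<sigma>. P \<sigma>}. \<Sum>\<tau>\<in>{\<tau>. Q \<tau>}. g \<sigma> \<tau>)"
proof -
  have "(\<Sum>\<tau>\<in>UNIV. if P \<sigma> \<and> Q \<tau> then g \<sigma> \<tau> else 0)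
      = (if P \<sigma> then (\<Sum>\<tau>\<in>{\<tau>. Q \<tau>}. g \<sigma> \<tau>) else 0)" for \<sigma>
    by (simp add: sum.If_cases)
  then show ?thesis by (simp add: sum.If_cases)
qed

lemma inner_moved_slice:
  fixes D :: "('a::finite,'q::finite) obs" and u v :: "complex^('a \<Rightarrow> 'q)"
  shows "(\<Sum>\<sigma>\<in>UNIV. \<Sum>\<tau>\<in>UNIV. if agree_outside S \<sigma> \<gamma> \<and> agree_outside S \<tau> \<gamma>
            then D $ join S \<sigma> \<rho> $ join S \<tau> \<rho> * v $ \<tau> * cnj (u $ \<sigma>) else 0)
    = (\<Sum>\<kappa>\<in>UNIV. (D *v moved_slice S v \<gamma> \<rho>) $ \<kappa> * cnj (moved_slice S u \<gamma> \<rho> $ \<kappa>))"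
    (is "?lhs = ?rhs")
proof -
  let ?T = "\<Sum>\<kappa>\<in>{\<kappa>. agree_outside S \<kappa> \<rho>}. \<Sum>\<mu>\<in>{\<mu>. agree_outside S \<mu> \<rho>}.
    D $ \<kappa> $ \<mu> * v $ join S \<mu> \<gamma> * cnj (u $ join S \<kappa> \<gamma>)"
  have "?lhs = (\<Sum>\<sigma>\<in>{\<sigma>. agree_outside S \<sigma> \<gamma>}. \<Sum>\<tau>\<in>{\<tau>. agree_outside S \<tau> \<gamma>}.
      D $ join S \<sigma> \<rho> $ join S \<tau> \<rho> * v $ \<tau> * cnj (u $ \<sigma>))"
    by (rule sum_if_and)
  also have "\<dots> = (\<Sum>\<kappa>\<in>{\<kappa>. agree_outside S \<kappa> \<rho>}. \<Sum>\<mu>\<in>{\<mu>. agree_outside S \<mu> \<rho>}.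
      D $ join S (join S \<kappa> \<gamma>) \<rho> $ join S (join S \<mu> \<gamma>) \<rho> * v $ join S \<mu> \<gamma>
        * cnj (u $ join S \<kappa> \<gamma>))"
    by (subst sum_agree_outside_reindex[where \<rho> = \<rho>], rule sum.cong[OF refl],
        rule sum_agree_outside_reindex)
  also have "\<dots> = ?T"
    by (intro sum.cong refl) (simp add: join_join)
  finally have "?lhs = ?T" .
  moreover have "?rhs = (\<Sum>\<kappa>\<in>UNIV. \<Sum>\<mu>\<in>UNIV. if agree_outside S \<kappa> \<rho> \<and> agree_outside S \<mu> \<rho>
      then D $ \<kappa> $ \<mu> * v $ join S \<mu> \<gamma> * cnj (u $ join S \<kappa> \<gamma>) else 0)"
    by (intro sum.cong refl)
      (auto simp: matrix_vector_mult_def moved_slice_def sum_distrib_right intro!: sum.cong)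
  ultimately show ?thesis by (simp add: sum_if_and)
qed

lemma cond_exp_inner_eq:
  fixes D :: "('a::finite,'q::finite) obs" and u v :: "complex^('a \<Rightarrow> 'q)" and S :: "'a set"
  defines "R \<equiv> (configs_on (- S) :: ('a \<Rightarrow> 'q) set)"
  shows "(\<Sum>\<sigma>\<in>UNIV. (cond_exp S D *v v) $ \<sigma> * cnj (u $ \<sigma>)) =
    (\<Sum>\<rho>\<in>R. \<Sum>\<gamma>\<in>R. \<Sum>\<kappa>\<in>UNIV. (D *v moved_slice S v \<gamma> \<rho>) $ \<kappa> * cnj (moved_slice S u \<gamma> \<rho> $ \<kappa>))
      / of_nat (card R)"
proof -
  let ?N = "of_nat (card R) :: complex"
  let ?H = "\<lambda>\<sigma> \<tau> \<rho>. if agree_outside S \<sigma> \<tau>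
    then D $ join S \<sigma> \<rho> $ join S \<tau> \<rho> * v $ \<tau> * cnj (u $ \<sigma>) else 0"
  let ?G = "\<lambda>\<rho> \<sigma> \<tau> \<gamma>. if agree_outside S \<sigma> \<gamma> \<and> agree_outside S \<tau> \<gamma>
    then D $ join S \<sigma> \<rho> $ join S \<tau> \<rho> * v $ \<tau> * cnj (u $ \<sigma>) else 0"
  have entry: "cond_exp S D $ \<sigma> $ \<tau> * v $ \<tau> * cnj (u $ \<sigma>) = (\<Sum>\<rho>\<in>R. ?H \<sigma> \<tau> \<rho>) / ?N" for \<sigma> \<tau>
    by (cases "agree_outside S \<sigma> \<tau>")
      (simp_all add: cond_exp_entry R_def sum_distrib_right sum_divide_distrib)
  have "(\<Sum>\<sigma>\<in>UNIV. (cond_exp S D *v v) $ \<sigma> * cnj (u $ \<sigma>))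
      = (\<Sum>\<sigma>\<in>UNIV. \<Sum>\<tau>\<in>UNIV. \<Sum>\<rho>\<in>R. ?H \<sigma> \<tau> \<rho>) / ?N"
    by (simp add: matrix_vector_mult_def sum_distrib_right entry sum_divide_distrib)
  also have "(\<Sum>\<sigma>\<in>UNIV. \<Sum>\<tau>\<in>UNIV. \<Sum>\<rho>\<in>R. ?H \<sigma> \<tau> \<rho>)
      = (\<Sum>\<rho>\<in>R. \<Sum>\<sigma>\<in>UNIV. \<Sum>\<tau>\<in>UNIV. ?H \<sigma> \<tau> \<rho>)"
    by (subst sum.swap) (rule sum.cong[OF refl], rule sum.swap)
  also have "\<dots> = (\<Sum>\<rho>\<in>R. \<Sum>\<gamma>\<in>R. \<Sum>\<sigma>\<in>UNIV. \<Sum>\<tau>\<in>UNIV. ?G \<rho> \<sigma> \<tau> \<gamma>)"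
  proof (rule sum.cong[OF refl])
    fix \<rho>
    have "?H \<sigma> \<tau> \<rho> = (\<Sum>\<gamma>\<in>R. ?G \<rho> \<sigma> \<tau> \<gamma>)" for \<sigma> \<tau>
      unfolding R_def sum_configs_on_agree_outside ..
    then have "(\<Sum>\<sigma>\<in>UNIV. \<Sum>\<tau>\<in>UNIV. ?H \<sigma> \<tau> \<rho>)
        = (\<Sum>\<sigma>\<in>UNIV. \<Sum>\<tau>\<in>UNIV. \<Sum>\<gamma>\<in>R. ?G \<rho> \<sigma> \<tau> \<gamma>)"
      by (simp only:)
    also have "\<dots> = (\<Sum>\<sigma>\<in>UNIV. \<Sum>\<gamma>\<in>R. \<Sum>\<tau>\<in>UNIV. ?G \<rho> \<sigma> \<tau> \<gamma>)"
      by (rule sum.cong[OF refl], rule sum.swap)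
    also have "\<dots> = (\<Sum>\<gamma>\<in>R. \<Sum>\<sigma>\<in>UNIV. \<Sum>\<tau>\<in>UNIV. ?G \<rho> \<sigma> \<tau> \<gamma>)"
      by (rule sum.swap)
    finally show "(\<Sum>\<sigma>\<in>UNIV. \<Sum>\<tau>\<in>UNIV. ?H \<sigma> \<tau> \<rho>) = \<dots>" .
  qed
  also have "\<dots> = (\<Sum>\<rho>\<in>R. \<Sum>\<gamma>\<in>R. \<Sum>\<kappa>\<in>UNIV.
      (D *v moved_slice S v \<gamma> \<rho>) $ \<kappa> * cnj (moved_slice S u \<gamma> \<rho> $ \<kappa>))"
    by (simp only: inner_moved_slice)
  finally show ?thesis .
qed

lemma cond_exp_inner_le:
  fixes D :: "('a::finite,'q::finite) obs" and u v :: "complex^('a \<Rightarrow> 'q)"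
  shows "inner (cond_exp S D *v v) u \<le> opnorm D * norm v * norm u"
proof -
  define R where "R = (configs_on (- S) :: ('a \<Rightarrow> 'q) set)"
  define a where "a = (\<lambda>\<gamma>. norm (slice S v \<gamma>))"
  define b where "b = (\<lambda>\<gamma>. norm (slice S u \<gamma>))"
  have block: "inner (D *v moved_slice S v \<gamma> \<rho>) (moved_slice S u \<gamma> \<rho>) \<le> opnorm D * (a \<gamma> * b \<gamma>)"
    for \<gamma> \<rho>
  proof -
    have "inner (D *v moved_slice S v \<gamma> \<rho>) (moved_slice S u \<gamma> \<rho>)
        \<le> norm (D *v moved_slice S v \<gamma> \<rho>) * norm (moved_slice S u \<gamma> \<rho>)"
      by (rule norm_cauchy_schwarz)
    also have "\<dots> \<le> (opnorm D * norm (moved_slice S v \<gamma> \<rho>)) * norm (moved_slice S u \<gamma> \<rho>)"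
      by (intro mult_right_mono opnorm_apply_le norm_ge_zero)
    finally show ?thesis by (simp add: norm_moved_slice a_def b_def mult_ac)
  qed
  have "inner (cond_exp S D *v v) u
      = (\<Sum>\<rho>\<in>R. \<Sum>\<gamma>\<in>R. inner (D *v moved_slice S v \<gamma> \<rho>) (moved_slice S u \<gamma> \<rho>)) / real (card R)"
    unfolding inner_vec_complex cond_exp_inner_eq R_def[symmetric]
    by (simp add: Re_sum inner_vec_complex Re_divide_of_nat)
  also have "\<dots> \<le> (\<Sum>\<rho>\<in>R. \<Sum>\<gamma>\<in>R. opnorm D * (a \<gamma> * b \<gamma>)) / real (card R)"
    by (intro divide_right_mono sum_mono block) simp
  also have "\<dots> = opnorm D * (\<Sum>\<gamma>\<in>R. a \<gamma> * b \<gamma>)"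
    using card_configs_on_pos by (simp add: R_def sum_distrib_left[symmetric])
  also have "\<dots> \<le> opnorm D * (L2_set a R * L2_set b R)"
    using L2_set_mult_ineq[where f = a and g = b and A = R] by (intro mult_left_mono opnorm_nonneg) (simp add: a_def b_def)
  also have "L2_set a R = norm v"
    unfolding L2_set_def a_def R_def sum_norm_slice_sq by simp
  also have "L2_set b R = norm u"
    unfolding L2_set_def b_def R_def sum_norm_slice_sq by simp
  finally show ?thesis by (simp add: mult_ac)
qed

lemma opnorm_cond_exp_le: "opnorm (cond_exp S D) \<le> opnorm (D :: ('a::finite,'q::finite) obs)"
  unfolding opnorm_def[of "cond_exp S D"]
proof (rule onorm_bound)
  show "0 \<le> opnorm D" by (rule opnorm_nonneg)
  fix v :: "complex^('a \<Rightarrow> 'q)"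
  let ?w = "cond_exp S D *v v"
  have "(norm ?w)\<^sup>2 \<le> opnorm D * norm v * norm ?w"
    unfolding power2_norm_eq_inner by (rule cond_exp_inner_le)
  then show "norm ?w \<le> opnorm D * norm v"
    by (cases "norm ?w = 0") (simp_all add: opnorm_nonneg power2_eq_square)
qed

section \<open>Locality of the dynamics\<close>

lemma graph_dist_self: "graph_dist E x x = 0"
proof -
  have "walk_len E 0 x x" unfolding walk_len_def by (rule exI[where x = "\<lambda>_. x"]) simp
  then show ?thesis unfolding graph_dist_def by (simp add: Least_eq_0)
qed

lemma subset_nbhd:
  assumes "r \<ge> 0"
  shows "X \<subseteq> nbhd E X r"
proof
  fix x assume "x \<in> X"
  then show "x \<in> nbhd E X r"
    unfolding nbhd_def using assms graph_dist_self[of E x] by (intro CollectI bexI) simp_all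
qed

lemma sum_opnorm_le_F_norm:
  fixes \<Psi> :: "'a::finite set \<Rightarrow> ('a,'q::finite) obs"
  assumes "decaying F"
  shows "(\<Sum>Z\<in>{Z. x \<in> Z \<and> y \<in> Z}. opnorm (\<Psi> Z)) \<le> F_norm E F \<Psi> * F (graph_dist E x y)"
proof -
  define f where "f = (\<lambda>x y. (\<Sum>Z\<in>{Z. x \<in> Z \<and> y \<in> Z}. opnorm (\<Psi> Z)) / F (graph_dist E x y))"
  have pos: "F (graph_dist E x y) > 0"
    using assms unfolding decaying_def graph_dist_def by simp
  have "finite {f x y | x y. True}"
    by (rule finite_subset[of _ "(\<lambda>(x, y). f x y) ` UNIV"]) auto
  then have "f x y \<le> Max {f x y | x y. True}" by (rule Max_ge) auto
  also have "\<dots> = F_norm E F \<Psi>" unfolding F_norm_def f_def ..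
  finally show ?thesis using pos unfolding f_def by (simp add: divide_le_eq)
qed

lemma sum_opnorm_meeting_le:
  fixes \<Psi> :: "'a::finite set \<Rightarrow> ('a,'q::finite) obs"
  assumes "decaying F"
  shows "(\<Sum>Z\<in>{Z. Z \<inter> X \<noteq> {} \<and> Z \<inter> Y \<noteq> {}}. opnorm (\<Psi> Z))
       \<le> F_norm E F \<Psi> * (\<Sum>x\<in>X. \<Sum>y\<in>Y. F (graph_dist E x y))"
proof -
  let ?T = "{Z. Z \<inter> X \<noteq> {} \<and> Z \<inter> Y \<noteq> {}}"
  let ?n = "\<lambda>x y Z. if x \<in> Z \<and> y \<in> Z then opnorm (\<Psi> Z) else 0"
  have n_nonneg: "?n x y Z \<ge> 0" for x y Z by (simp add: opnorm_nonneg)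
  have "opnorm (\<Psi> Z) \<le> (\<Sum>x\<in>X. \<Sum>y\<in>Y. ?n x y Z)" if Z: "Z \<in> ?T" for Z
  proof -
    obtain x y where xy: "x \<in> Z" "x \<in> X" "y \<in> Z" "y \<in> Y" using Z by blast
    then have "opnorm (\<Psi> Z) = ?n x y Z" by simp
    also have "\<dots> \<le> (\<Sum>y\<in>Y. ?n x y Z)"
      by (rule member_le_sum[OF xy(4)]) (simp_all add: n_nonneg)
    also have "\<dots> \<le> (\<Sum>x\<in>X. \<Sum>y\<in>Y. ?n x y Z)"
      by (rule member_le_sum[OF xy(2), where f = "\<lambda>x. \<Sum>y\<in>Y. ?n x y Z"])
        (simp_all add: n_nonneg sum_nonneg)
    finally show ?thesis .
  qed
  then have "(\<Sum>Z\<in>?T. opnorm (\<Psi> Z)) \<le> (\<Sum>Z\<in>?T. \<Sum>x\<in>X. \<Sum>y\<in>Y. ?n x y Z)"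
    by (rule sum_mono)
  also have "\<dots> = (\<Sum>x\<in>X. \<Sum>y\<in>Y. \<Sum>Z\<in>?T. ?n x y Z)"
    by (subst sum.swap) (rule sum.cong[OF refl], rule sum.swap)
  also have "\<dots> \<le> (\<Sum>x\<in>X. \<Sum>y\<in>Y. \<Sum>Z\<in>UNIV. ?n x y Z)"
    by (intro sum_mono sum_mono2) (simp_all add: n_nonneg)
  also have "\<dots> = (\<Sum>x\<in>X. \<Sum>y\<in>Y. \<Sum>Z\<in>{Z. x \<in> Z \<and> y \<in> Z}. opnorm (\<Psi> Z))"
    by (simp add: sum.If_cases)
  also have "\<dots> \<le> (\<Sum>x\<in>X. \<Sum>y\<in>Y. F_norm E F \<Psi> * F (graph_dist E x y))"
    by (intro sum_mono sum_opnorm_le_F_norm assms)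
  finally show ?thesis by (simp add: sum_distrib_left)
qed

lemma commuting_mult: "commuting \<Psi> \<Longrightarrow> \<Psi> Z ** \<Psi> Z' = \<Psi> Z' ** \<Psi> Z"
  unfolding commuting_def commutator_def by (metis eq_iff_diff_eq_0)

lemma self_adjoint_sum: "(\<And>x. x \<in> T \<Longrightarrow> self_adjoint (f x)) \<Longrightarrow> self_adjoint (sum f T)"
proof -
  have "cadj (sum f T) = (\<Sum>x\<in>T. cadj (f x))"
    by (simp add: vec_eq_iff cadj_def sum_component cnj_sum)
  then show "(\<And>x. x \<in> T \<Longrightarrow> self_adjoint (f x)) \<Longrightarrow> self_adjoint (sum f T)"
    by (simp add: self_adjoint_def)
qed

lemma sum_UNIV_split3:
  fixes f :: "'b::finite \<Rightarrow> 'c::comm_monoid_add"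
  shows "sum f UNIV = sum f {x. P x \<and> Q x} + sum f {x. P x \<and> \<not> Q x} + sum f {x. \<not> P x}"
proof -
  have filter: "sum f {x. R x} = (\<Sum>x\<in>UNIV. if R x then f x else 0)" for R
    using sum.inter_filter[of UNIV f R] by simp
  show ?thesis
    unfolding filter sum.distrib[symmetric] by (rule sum.cong) auto
qed

lemma sum_mult_sum_commute:
  fixes f g :: "'b \<Rightarrow> 'a::ring"
  assumes "\<And>i j. i \<in> A \<Longrightarrow> j \<in> B \<Longrightarrow> f i * g j = g j * f i"
  shows "sum f A * sum g B = sum g B * sum f A"
proof -
  have "sum f A * sum g B = (\<Sum>i\<in>A. \<Sum>j\<in>B. g j * f i)"
    using assms by (simp add: sum_product)
  also have "\<dots> = sum g B * sum f A"
    by (subst sum.swap) (simp add: sum_product)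
  finally show ?thesis .
qed

lemma exp_conj_split:
  fixes w p q a :: "'a::{real_normed_algebra_1,banach}"
  assumes wp: "w * p = p * w" and wq: "w * q = q * w" and pq: "p * q = q * p"
    and qa: "q * a = a * q"
  shows "exp (t *\<^sub>R (w + p + q)) * a * exp ((- t) *\<^sub>R (w + p + q))
       = exp (t *\<^sub>R w) * (exp (t *\<^sub>R p) * a * exp ((- t) *\<^sub>R p)) * exp ((- t) *\<^sub>R w)"
proof -
  have exp3: "exp (s *\<^sub>R (x + y + z)) = exp (s *\<^sub>R x) * exp (s *\<^sub>R y) * exp (s *\<^sub>R z)"
    if "x * y = y * x" "x * z = z * x" "y * z = z * y" for x y z :: 'a and s
    using that by (simp add: scaleR_add_right exp_add_commuting algebra_simps)
  let ?eW = "exp (t *\<^sub>R w)" and ?eP = "exp (t *\<^sub>R p)" and ?eQ = "exp (t *\<^sub>R q)"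
  let ?fW = "exp ((- t) *\<^sub>R w)" and ?fP = "exp ((- t) *\<^sub>R p)" and ?fQ = "exp ((- t) *\<^sub>R q)"
  have e1: "exp (t *\<^sub>R (w + p + q)) = ?eW * ?eP * ?eQ"
    using wp wq pq by (rule exp3)
  have e2: "exp ((- t) *\<^sub>R (w + p + q)) = ?fQ * ?fP * ?fW"
    using exp3[of q p w "- t"] wp wq pq by (simp add: add_ac)
  have qa': "?eQ * a = a * ?eQ"
    using qa by (intro exp_mult_commute) (simp add: algebra_simps)
  have qq: "?eQ * ?fQ = 1"
    using exp_minus_inverse[of "t *\<^sub>R q"] by simp
  have "exp (t *\<^sub>R (w + p + q)) * a * exp ((- t) *\<^sub>R (w + p + q))
      = ?eW * ?eP * (?eQ * a) * ?fQ * ?fP * ?fW"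
    by (simp only: e1 e2 mult.assoc)
  also have "\<dots> = ?eW * ?eP * a * (?eQ * ?fQ) * ?fP * ?fW"
    by (simp only: qa' mult.assoc)
  also have "\<dots> = ?eW * (?eP * a * ?fP) * ?fW"
    by (simp only: qq mult_1_right mult.assoc)
  finally show ?thesis .
qed

lemma cop_of_mat_tau_split:
  fixes \<Psi> :: "'a::finite set \<Rightarrow> ('a,'q::finite) obs" and X Y :: "'a set"
  assumes int: "interaction \<Psi>" and com: "commuting \<Psi>" and A: "A \<in> local_alg X"
  defines "W \<equiv> sum \<Psi> {Z. Z \<inter> X \<noteq> {} \<and> Z \<inter> Y \<noteq> {}}"
    and "P \<equiv> sum \<Psi> {Z. Z \<inter> X \<noteq> {} \<and> Z \<inter> Y = {}}"
  shows "cop_of_mat (tau \<Psi> t A) = exp (t *\<^sub>R i_op W)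
     * (exp (t *\<^sub>R i_op P) * cop_of_mat A * exp ((- t) *\<^sub>R i_op P)) * exp ((- t) *\<^sub>R i_op W)"
proof -
  define Q where "Q = sum \<Psi> {Z. Z \<inter> X = {}}"
  have "hamiltonian \<Psi> = W + P + Q"
    unfolding hamiltonian_def W_def P_def Q_def
    using sum_UNIV_split3[of \<Psi> "\<lambda>Z. Z \<inter> X \<noteq> {}" "\<lambda>Z. Z \<inter> Y \<noteq> {}"] by simp
  then have H: "i_op (hamiltonian \<Psi>) = i_op W + i_op P + i_op Q" by (simp add: i_op_add)
  have commute: "i_op (sum \<Psi> T) * i_op (sum \<Psi> T') = i_op (sum \<Psi> T') * i_op (sum \<Psi> T)" for T T'
    unfolding i_op_sum by (intro sum_mult_sum_commute i_op_commute commuting_mult[OF com])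
  have "i_op Q * cop_of_mat A = cop_of_mat A * i_op Q"
    unfolding Q_def i_op_sum sum_distrib_left sum_distrib_right
    by (intro sum.cong refl i_op_commute_cop_of_mat local_alg_commute[OF _ _ A])
      (use int in \<open>auto simp: interaction_def\<close>)
  then show ?thesis
    unfolding tau_def cop_of_mat_conj_mexp H W_def P_def Q_def
    by (intro exp_conj_split commute)
qed

lemma tau_approx_local:
  fixes \<Psi> :: "'a::finite set \<Rightarrow> ('a,'q::finite) obs"
  assumes int: "interaction \<Psi>" and com: "commuting \<Psi>" and dec: "decaying F"
    and XY: "X \<inter> Y = {}" and A: "A \<in> local_alg X"
  obtains C where "C \<in> local_alg (- Y)"
    and "opnorm (tau \<Psi> t A - C)
      \<le> 2 * \<bar>t\<bar> * opnorm A * (F_norm E F \<Psi> * (\<Sum>x\<in>X. \<Sum>y\<in>Y. F (graph_dist E x y)))"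
proof -
  define W where "W = sum \<Psi> {Z. Z \<inter> X \<noteq> {} \<and> Z \<inter> Y \<noteq> {}}"
  define P where "P = sum \<Psi> {Z. Z \<inter> X \<noteq> {} \<and> Z \<inter> Y = {}}"
  define C where "C = mexp (cscale (\<i> * of_real t) P) ** A ** mexp (cscale (- \<i> * of_real t) P)"
  have "\<Psi> Z \<in> local_alg (- Y)" if "Z \<inter> Y = {}" for Z
    using that local_alg_mono[of Z "- Y"] int unfolding interaction_def by blast
  then have "P \<in> local_alg (- Y)" unfolding P_def by (intro local_alg_sum) simp
  moreover have "A \<in> local_alg (- Y)" using A XY local_alg_mono[of X "- Y"] by blast
  ultimately have C_local: "C \<in> local_alg (- Y)"
    unfolding C_def by (intro local_alg_mult local_alg_mexp local_alg_cscale)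
  have skew: "skew (i_op (sum \<Psi> T))" for T
    using int by (intro skew_i_op self_adjoint_sum) (simp add: interaction_def)
  have C_eq: "cop_of_mat C = exp (t *\<^sub>R i_op P) * cop_of_mat A * exp ((- t) *\<^sub>R i_op P)"
    unfolding C_def by (rule cop_of_mat_conj_mexp)
  have "cop_of_mat (tau \<Psi> t A) = exp (t *\<^sub>R i_op W) * cop_of_mat C * exp ((- t) *\<^sub>R i_op W)"
    unfolding C_eq W_def P_def by (rule cop_of_mat_tau_split[OF int com A])
  then have "opnorm (tau \<Psi> t A - C) \<le> 2 * \<bar>t\<bar> * norm (i_op W) * norm (cop_of_mat C)"
    using skew_norm_conj_diff_le[OF skew] by (simp add: opnorm_eq_norm_cop cop_of_mat_diff W_def)
  also have "\<dots> \<le> 2 * \<bar>t\<bar> * opnorm W * opnorm A"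
    unfolding C_eq norm_i_op opnorm_eq_norm_cop[of A] P_def
    by (intro mult_left_mono skew_norm_conj_le[OF skew]) (simp add: opnorm_nonneg)
  also have "\<dots> \<le> 2 * \<bar>t\<bar> * (F_norm E F \<Psi> * (\<Sum>x\<in>X. \<Sum>y\<in>Y. F (graph_dist E x y))) * opnorm A"
    unfolding W_def
    by (intro mult_right_mono mult_left_mono order.trans[OF opnorm_sum_le sum_opnorm_meeting_le[OF dec]])
      (simp_all add: opnorm_nonneg)
  finally have "opnorm (tau \<Psi> t A - C)
      \<le> 2 * \<bar>t\<bar> * opnorm A * (F_norm E F \<Psi> * (\<Sum>x\<in>X. \<Sum>y\<in>Y. F (graph_dist E x y)))"
    by (simp only: mult_ac)
  with C_local show ?thesis by (rule that)
qed
lemma opnorm_commutator_tau_le: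
  fixes \<Psi> :: "'a::finite set \<Rightarrow> ('a,'q::finite) obs"
  assumes "interaction \<Psi>" and "commuting \<Psi>" and "decaying F"
    and XY: "X \<inter> Y = {}" and A: "A \<in> local_alg X" and B: "B \<in> local_alg Y"
  shows "opnorm (commutator (tau \<Psi> t A) B)
       \<le> 4 * F_norm E F \<Psi> * opnorm A * opnorm B * \<bar>t\<bar> * (\<Sum>x\<in>X. \<Sum>y\<in>Y. F (graph_dist E x y))"
proof -
  obtain C where C: "C \<in> local_alg (- Y)"
    and approx: "opnorm (tau \<Psi> t A - C)
      \<le> 2 * \<bar>t\<bar> * opnorm A * (F_norm E F \<Psi> * (\<Sum>x\<in>X. \<Sum>y\<in>Y. F (graph_dist E x y)))"
    using tau_approx_local[OF assms(1-5)] .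
  have "C ** B = B ** C" by (rule local_alg_commute[OF _ C B]) simp
  then have "opnorm (commutator (tau \<Psi> t A) B) \<le> 2 * opnorm (tau \<Psi> t A - C) * opnorm B"
    by (rule opnorm_commutator_le)
  also have "\<dots> \<le> 2 * (2 * \<bar>t\<bar> * opnorm A * (F_norm E F \<Psi> * (\<Sum>x\<in>X. \<Sum>y\<in>Y. F (graph_dist E x y))))
      * opnorm B"
    by (intro mult_right_mono mult_left_mono approx opnorm_nonneg) simp
  finally show ?thesis by (simp add: mult_ac)
qed

lemma opnorm_tau_minus_cond_exp_le:
  fixes \<Psi> :: "'a::finite set \<Rightarrow> ('a,'q::finite) obs"
  assumes "interaction \<Psi>" and "commuting \<Psi>" and "decaying F"
    and A: "A \<in> local_alg X" and "r \<ge> 0"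
  shows "opnorm (tau \<Psi> t A - cond_exp (nbhd E X r) (tau \<Psi> t A))
       \<le> 4 * F_norm E F \<Psi> * opnorm A * \<bar>t\<bar> * (\<Sum>x\<in>X. \<Sum>y\<in>UNIV - nbhd E X r. F (graph_dist E x y))"
proof -
  define S where "S = nbhd E X r"
  let ?T = "tau \<Psi> t A"
  have "X \<subseteq> S" unfolding S_def by (rule subset_nbhd) fact
  then have "X \<inter> (UNIV - S) = {}" by blast
  then obtain C where C: "C \<in> local_alg (- (UNIV - S))"
    and approx: "opnorm (?T - C) \<le> 2 * \<bar>t\<bar> * opnorm A
      * (F_norm E F \<Psi> * (\<Sum>x\<in>X. \<Sum>y\<in>UNIV - S. F (graph_dist E x y)))"
    by (rule tau_approx_local[OF assms(1-3) _ A])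
  from C have "cond_exp S C = C" by (intro cond_exp_local_alg) (simp add: Diff_Diff_Int)
  then have "?T - cond_exp S ?T = (?T - C) - cond_exp S (?T - C)"
    by (simp add: cond_exp_diff)
  then have "opnorm (?T - cond_exp S ?T) \<le> opnorm (?T - C) + opnorm (cond_exp S (?T - C))"
    by (simp only: opnorm_diff_le)
  also have "\<dots> \<le> 2 * opnorm (?T - C)"
    using opnorm_cond_exp_le[of S "?T - C"] by linarith
  finally show ?thesis
    using approx unfolding S_def by argo
qed

theorem corollary3p8:
  fixes E :: "'a::finite \<Rightarrow> 'a \<Rightarrow> bool"
    and \<Psi> :: "'a set \<Rightarrow> ('a, 'q::finite) obs"
    and F :: "real \<Rightarrow> real"
    and t :: real
  assumes "symp E"
    and "connected_graph E"
    and "interaction \<Psi>"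
    and "commuting \<Psi>"
    and "decaying F"
  shows "(\<forall>X Y A B. X \<inter> Y = {} \<and> A \<in> local_alg X \<and> B \<in> local_alg Y \<longrightarrow>
            opnorm (commutator (tau \<Psi> t A) B)
              \<le> 4 * F_norm E F \<Psi> * opnorm A * opnorm B * \<bar>t\<bar>
                 * (\<Sum>x\<in>X. \<Sum>y\<in>Y. F (graph_dist E x y)))
       \<and> (\<forall>X A r. A \<in> local_alg X \<and> r \<ge> 0 \<longrightarrow>
            opnorm (tau \<Psi> t A - cond_exp (nbhd E X r) (tau \<Psi> t A))
              \<le> 4 * F_norm E F \<Psi> * opnorm A * \<bar>t\<bar>
                 * (\<Sum>x\<in>X. \<Sum>y\<in>UNIV - nbhd E X r. F (graph_dist E x y)))"
  using opnorm_commutator_tau_le[OF assms(3-5)] opnorm_tau_minus_cond_exp_le[OF assms(3-5)]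
  by blast

end
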